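(* Let $P$ be a nondegenerate polyhedron in $\mathbb{R}^3$ which is the image of a sphere-homeomorphic simplicial complex $K$, which is rigid, and for which there exists a sequence of flexible nondegenerate polyhedra $P_n$, each having the same combinatorial structure as $P$, with $P_n\to P$ as $n\to\infty$. Let $v$ be the number of vertices of $P$. Then there is no algebraic set $A\subset\mathbb{R}^{3v}$ such that $\varphi(F_{[\![P]\!]}) = A\cap\varphi([\![P]\!])$.
   Context: A polyhedron is a continuous mapping from a finite 2-dimensional simplicial complex $K$ into $\mathbb{R}^3$ that is affine on each simplex of $K$. Its vertices, edges and faces are the images of the vertices, edges and 2-simplices of $K$. A polyhedron is nondegenerate if every face is a nondegenerate (non-collinear) triangle. Two nondegenerate polyhedra have the same combinatorial structure if they are mappings from the same simplicial complex. A polyhedron is flexible if it admits a continuous deformation through polyhedra on the same complex keeping every face congruent to itself (all edge lengths preserved) that is not induced by isometries of $\mathbb{R}^3$; otherwise it is rigid. For a nondegenerate polyhedron $Q$ on a complex $K$ with $v$ vertices, $[\![Q]\!]$ denotes the set of all nondegenerate polyhedra with the same combinatorial structure as $Q$. Fixing an enumeration of the vertices of $K$, the map $\varphi:[\![Q]\!]\to\mathbb{R}^{3v}$ sends a polyhedron to the point listing the coordinates of its vertices in this order ($\varphi([\![Q]\!])$ is open in $\mathbb{R}^{3v}$). $F_{[\![Q]\!]}$ denotes the set of flexible polyhedra in $[\![Q]\!]$. Convergence $P_n\to P$ means $\varphi(P_n)\to\varphi(P)$ in $\mathbb{R}^{3v}$. An algebraic set in $\mathbb{R}^{3v}$ is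 the common zero set of a family of real polynomials in $3v$ variables. *)

theory Defs
  imports "HOL-Analysis.Analysis"
begin

definition simplicial_complex2 :: "nat \<Rightarrow> nat set set \<Rightarrow> bool" where
  "simplicial_complex2 v K \<longleftrightarrow>
     (\<forall>s\<in>K. s \<noteq> {} \<and> s \<subseteq> {..<v} \<and> card s \<le> 3) \<and>
     (\<forall>s\<in>K. \<forall>t. t \<noteq> {} \<and> t \<subseteq> s \<longrightarrow> t \<in> K) \<and>
     (\<forall>i<v. {i} \<in> K)"

text \<open>Geometric realization |K| via barycentric coordinates, as a subspace of the
  product space nat => real (on which the topology is the Euclidean one of R^v).\<close>

definition geom_realization :: "nat \<Rightarrow> nat set set \<Rightarrow> (nat \<Rightarrow> real) set" where
  "geom_realization v K =
     {t. (\<forall>i. 0 \<le> t i) \<and> (\<forall>i\<ge>v. t i = 0) \<and> (\<Sum>i<v. t i) = 1 \<and> {i. t i \<noteq> 0} \<in> K}"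

definition sphere_complex :: "nat \<Rightarrow> nat set set \<Rightarrow> bool" where
  "sphere_complex v K \<longleftrightarrow> simplicial_complex2 v K \<and>
     geom_realization v K homeomorphic sphere (0::real^3) 1"

text \<open>A polyhedron on K is determined by the positions of its vertices
  p :: nat => real^3 (only the values on {0..<v} are relevant); it is the
  map |K| -> R^3 affine on each simplex with these vertex images.\<close>

definition nondegenerate :: "nat set set \<Rightarrow> (nat \<Rightarrow> real^3) \<Rightarrow> bool" where
  "nondegenerate K p \<longleftrightarrow> (\<forall>s\<in>K. card s = 3 \<longrightarrow> \<not> collinear (p ` s))"

definition isometry3 :: "(real^3 \<Rightarrow> real^3) \<Rightarrow> bool" where
  "isometry3 g \<longleftrightarrow> (\<forall>x y. dist (g x) (g y) = dist x y)"

definition flexible :: "nat \<Rightarrow> nat set set \<Rightarrow> (nat \<Rightarrow> real^3) \<Rightarrow> bool" where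
  "flexible v K p \<longleftrightarrow>
     (\<exists>q :: real \<Rightarrow> nat \<Rightarrow> real^3.
        (\<forall>i<v. continuous_on {0..1} (\<lambda>t. q t i)) \<and>
        (\<forall>i<v. q 0 i = p i) \<and>
        (\<forall>t\<in>{0..1}. \<forall>i j. {i, j} \<in> K \<longrightarrow> dist (q t i) (q t j) = dist (p i) (p j)) \<and>
        \<not> (\<forall>t\<in>{0..1}. \<exists>g. isometry3 g \<and> (\<forall>i<v. q t i = g (p i))))"

text \<open>The coordinate map phi: vertex i contributes coordinates 3i, 3i+1, 3i+2.
  Points of R^(3v) are functions nat => real vanishing from index 3v on.\<close>

definition phi :: "nat \<Rightarrow> (nat \<Rightarrow> real^3) \<Rightarrow> (nat \<Rightarrow> real)" where
  "phi v p = (\<lambda>k. if k < 3 * v then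
       p (k div 3) $ (if k mod 3 = 0 then 1 else if k mod 3 = 1 then 2 else 3) else 0)"

inductive_set poly_fun :: "nat \<Rightarrow> ((nat \<Rightarrow> real) \<Rightarrow> real) set" for n :: nat where
  const: "(\<lambda>x. c) \<in> poly_fun n"
| var: "i < n \<Longrightarrow> (\<lambda>x. x i) \<in> poly_fun n"
| add: "f \<in> poly_fun n \<Longrightarrow> g \<in> poly_fun n \<Longrightarrow> (\<lambda>x. f x + g x) \<in> poly_fun n"
| mult: "f \<in> poly_fun n \<Longrightarrow> g \<in> poly_fun n \<Longrightarrow> (\<lambda>x. f x * g x) \<in> poly_fun n"

definition algebraic_set :: "nat \<Rightarrow> (nat \<Rightarrow> real) set \<Rightarrow> bool" where
  "algebraic_set n A \<longleftrightarrow>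
     (\<exists>F. F \<subseteq> poly_fun n \<and> A = {x. (\<forall>i\<ge>n. x i = 0) \<and> (\<forall>f\<in>F. f x = 0)})"

end

theory Submission
  imports Defs
begin

text \<open>Algebraic sets are closed, since polynomial functions are continuous. The flexible
  polyhedra P n converge to p, so if their coordinate points were cut out of the
  nondegenerate configurations by an algebraic set, the limit phi p would lie in that set
  as well; p being nondegenerate, it would then be flexible, contradicting its rigidity.\<close>

lemma continuous_on_poly_fun:
  assumes "f \<in> poly_fun n"
  shows "continuous_on UNIV f"
  using assms
proof (induction f rule: poly_fun.induct)
  case (var i)
  show ?case by simp
qed (auto intro: continuous_intros)

lemma closed_algebraic_set:
  assumes "algebraic_set n A"
  shows "closed A"
proof -
  obtain F where F: "F \<subseteq> poly_fun n"
    and A: "A = {x. (\<forall>i\<ge>n. x i = 0) \<and> (\<forall>f\<in>F. f x = 0)}"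
    using assms unfolding algebraic_set_def by blast
  have "A = (\<Inter>i\<in>{n..}. {x. x i = 0}) \<inter> (\<Inter>f\<in>F. {x. f x = 0})"
    unfolding A by auto
  moreover have "closed {x::nat \<Rightarrow> real. x i = 0}" for i
    by (intro closed_Collect_eq continuous_on_product_coordinates continuous_on_const)
  moreover have "closed {x. f x = 0}" if "f \<in> F" for f
    using that F continuous_on_poly_fun
    by (intro closed_Collect_eq continuous_on_const) auto
  ultimately show ?thesis by auto
qed

lemma phi_eq_imp_eq_on_vertices:
  assumes "phi v q = phi v p" "i < v"
  shows "q i = p i"
proof -
  have coord: "q i $ j = p i $ j"
    if "(m::nat) < 3" "j = (if m = 0 then 1 else if m = 1 then 2 else 3)" for m j
  proof -
    have index: "(3 * i + m) div 3 = i" "(3 * i + m) mod 3 = m"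
      using \<open>m < 3\<close> by auto
    show ?thesis
      using fun_cong[OF assms(1), of "3 * i + m"] that assms(2)
      unfolding phi_def index by (auto split: if_splits)
  qed
  have "q i $ 1 = p i $ 1" "q i $ 2 = p i $ 2" "q i $ 3 = p i $ 3"
    using coord[of 0] coord[of 1] coord[of 2] by simp_all
  then show ?thesis unfolding vec_eq_iff forall_3 by simp
qed

lemma edge_vertices_less:
  assumes "simplicial_complex2 v K" "{i, j} \<in> K"
  shows "i < v" "j < v"
  using assms unfolding simplicial_complex2_def by auto

lemma flexible_cong:
  assumes "simplicial_complex2 v K" "\<And>i. i < v \<Longrightarrow> q i = p i"
  shows "flexible v K q \<longleftrightarrow> flexible v K p"
proof -
  have "dist (q i) (q j) = dist (p i) (p j)" if "{i, j} \<in> K" for i j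
    using edge_vertices_less[OF assms(1) that] assms(2) by simp
  then show ?thesis
    unfolding flexible_def using assms(2) by (intro ex_cong1) auto
qed

theorem theorem2:
  fixes v :: nat and K :: "nat set set" and p :: "nat \<Rightarrow> real^3"
    and P :: "nat \<Rightarrow> nat \<Rightarrow> real^3"
  assumes "sphere_complex v K"
    and "nondegenerate K p"
    and "\<not> flexible v K p"
    and "\<And>n. nondegenerate K (P n) \<and> flexible v K (P n)"
    and "(\<lambda>n. phi v (P n)) \<longlonglongrightarrow> phi v p"
  shows "\<not> (\<exists>A. algebraic_set (3 * v) A \<and>
             phi v ` {q. nondegenerate K q \<and> flexible v K q}
               = A \<inter> phi v ` {q. nondegenerate K q})"
proof
  assume "\<exists>A. algebraic_set (3 * v) A \<and>
             phi v ` {q. nondegenerate K q \<and> flexible v K q}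
               = A \<inter> phi v ` {q. nondegenerate K q}"
  then obtain A where "closed A"
    and flex_eq: "phi v ` {q. nondegenerate K q \<and> flexible v K q}
               = A \<inter> phi v ` {q. nondegenerate K q}"
    using closed_algebraic_set by blast
  have "phi v (P n) \<in> A" for n
    using flex_eq assms(4)[of n] by blast
  then have "phi v p \<in> A"
    using closed_sequentially[OF \<open>closed A\<close> _ assms(5)] by blast
  with assms(2) have "phi v p \<in> phi v ` {q. nondegenerate K q \<and> flexible v K q}"
    unfolding flex_eq by blast
  then obtain q where "flexible v K q" "phi v q = phi v p"
    by auto
  moreover have "simplicial_complex2 v K"
    using assms(1) unfolding sphere_complex_def by simp
  ultimately have "flexible v K p"
    using flexible_cong phi_eq_imp_eq_on_vertices by blast
  with assms(3) show False ..
qed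

end
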